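(* Let $C$ be a normal, closed cone with nonempty interior in a real Banach space and let $u\in\operatorname{int} C$. Then the map $f(x)=x+u$ is $\tau$-condensing on $\operatorname{int} C$.
   Context: A closed cone $C$ (closed convex, $\lambda C\subseteq C$ for $\lambda\ge0$, $C\cap(-C)=\{0\}$) induces the order $x\le y$ iff $y-x\in C$. $C$ is normal if there is $\kappa$ with $\|x\|\le\kappa\|y\|$ whenever $0\le x\le y$. Thompson's metric on $\operatorname{int}C$: $d_T(x,y)=\log\inf\{\beta\ge1:\beta^{-1}x\le y\le\beta x\}$. For a $d_T$-bounded set $A\subseteq\operatorname{int}C$, $\tau(A)=\inf\{d>0: A$ has a finite cover by sets of $d_T$-diameter $\le d\}$. A continuous map $f:D\to\operatorname{int}C$ ($D\subseteq \operatorname{int}C$) is $\tau$-condensing if $\tau(f(A))<\tau(A)$ for every $d_T$-bounded $A\subseteq D$ with $\tau(A)>0$. *)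

theory Defs
  imports "HOL-Analysis.Analysis"
begin

definition closed_cone :: "'a::real_normed_vector set \<Rightarrow> bool" where
  "closed_cone C \<longleftrightarrow> closed C \<and> convex C \<and>
     (\<forall>t::real. \<forall>x\<in>C. t \<ge> 0 \<longrightarrow> t *\<^sub>R x \<in> C) \<and>
     C \<inter> uminus ` C = {0}"

definition cone_le :: "'a::real_normed_vector set \<Rightarrow> 'a \<Rightarrow> 'a \<Rightarrow> bool" where
  "cone_le C x y \<longleftrightarrow> y - x \<in> C"

definition normal_cone :: "'a::real_normed_vector set \<Rightarrow> bool" where
  "normal_cone C \<longleftrightarrow> (\<exists>\<kappa>::real. \<forall>x y. cone_le C 0 x \<and> cone_le C x y \<longrightarrow> norm x \<le> \<kappa> * norm y)"

definition thompson :: "'a::real_normed_vector set \<Rightarrow> 'a \<Rightarrow> 'a \<Rightarrow> real" where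
  "thompson C x y = ln (Inf {\<beta>::real. \<beta> \<ge> 1 \<and> cone_le C ((1/\<beta>) *\<^sub>R x) y \<and> cone_le C y (\<beta> *\<^sub>R x)})"

definition thompson_bounded :: "'a::real_normed_vector set \<Rightarrow> 'a set \<Rightarrow> bool" where
  "thompson_bounded C A \<longleftrightarrow> A \<subseteq> interior C \<and> (\<exists>M. \<forall>x\<in>A. \<forall>y\<in>A. thompson C x y \<le> M)"

definition tau :: "'a::real_normed_vector set \<Rightarrow> 'a set \<Rightarrow> real" where
  "tau C A = Inf {d. d > 0 \<and> (\<exists>F. finite F \<and> A \<subseteq> \<Union>F \<and>
       (\<forall>S\<in>F. S \<subseteq> interior C \<and> (\<forall>x\<in>S. \<forall>y\<in>S. thompson C x y \<le> d)))}"

definition tau_condensing :: "'a::real_normed_vector set \<Rightarrow> 'a set \<Rightarrow> ('a \<Rightarrow> 'a) \<Rightarrow> bool" where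
  "tau_condensing C D f \<longleftrightarrow> D \<subseteq> interior C \<and> continuous_on D f \<and> f ` D \<subseteq> interior C \<and>
     (\<forall>A. A \<subseteq> D \<and> thompson_bounded C A \<and> tau C A > 0 \<longrightarrow> tau C (f ` A) < tau C A)"

end

theory Submission
  imports Defs
begin

text \<open>Translation by \<open>u\<close> contracts Thompson's metric: if \<open>x \<le> y \<le> \<beta> x\<close> and
  \<open>c (x + u) \<le> u\<close> for some \<open>0 < c < 1\<close>, then \<open>y + u \<le> ((1 - c) \<beta> + c) (x + u)\<close>, so
  \<open>exp d\<^sub>T(x + u, y + u) \<le> (1 - c) exp d\<^sub>T(x, y) + c\<close>. A Thompson-bounded set \<open>A\<close> lies below
  \<open>K u\<close> for some \<open>K\<close>, so one \<open>c = 1/(K + 1)\<close> works for all of \<open>A\<close>, and every cover of \<open>A\<close>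
  by sets of diameter \<open>d\<close> is mapped to a cover of \<open>A + u\<close> by sets of diameter
  \<open>ln ((1 - c) exp d + c) < d\<close>.\<close>

lemma closed_cone_scaleR: "closed_cone C \<Longrightarrow> x \<in> C \<Longrightarrow> (t::real) \<ge> 0 \<Longrightarrow> t *\<^sub>R x \<in> C"
  unfolding closed_cone_def by blast

lemma closed_cone_add:
  assumes "closed_cone C" "x \<in> C" "y \<in> C" shows "x + y \<in> C"
proof -
  have "convex C" using assms(1) unfolding closed_cone_def by blast
  then have "(1/2::real) *\<^sub>R x + (1/2::real) *\<^sub>R y \<in> C"
    using convexD[OF _ assms(2,3), of "1/2" "1/2"] by simp
  from closed_cone_scaleR[OF assms(1) this, of 2] show ?thesis
    by (simp add: scaleR_right_distrib)
qed

lemma cone_le_trans: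
  "closed_cone C \<Longrightarrow> cone_le C x y \<Longrightarrow> cone_le C y z \<Longrightarrow> cone_le C x z"
  unfolding cone_le_def using closed_cone_add[of C "z - y" "y - x"] by simp

lemma cone_le_add_right: "cone_le C x y \<Longrightarrow> cone_le C (x + z) (y + z)"
  by (simp add: cone_le_def)

lemma cone_le_scaleR:
  "closed_cone C \<Longrightarrow> cone_le C x y \<Longrightarrow> (t::real) \<ge> 0 \<Longrightarrow> cone_le C (t *\<^sub>R x) (t *\<^sub>R y)"
  unfolding cone_le_def using closed_cone_scaleR[of C "y - x" t] by (simp add: scaleR_diff_right)

lemma cone_le_scaleR_left:
  "closed_cone C \<Longrightarrow> x \<in> C \<Longrightarrow> (s::real) \<le> t \<Longrightarrow> cone_le C (s *\<^sub>R x) (t *\<^sub>R x)"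
  unfolding cone_le_def using closed_cone_scaleR[of C x "t - s"] by (simp add: scaleR_diff_left)

lemma interior_closed_cone_absorbing:
  assumes "closed_cone C" "x \<in> interior C"
  obtains r where "r > 0" "cone_le C y (r *\<^sub>R x)"
proof -
  obtain e where e: "e > 0" "ball x e \<subseteq> C" using assms(2) by (meson mem_interior)
  define s where "s = e / (norm y + 1)"
  have s: "s > 0" using e by (simp add: s_def add_nonneg_pos)
  have "norm (s *\<^sub>R y) = e * norm y / (norm y + 1)"
    using s e(1) by (simp add: s_def)
  also have "\<dots> < e" using e(1) by (simp add: divide_less_eq add_nonneg_pos)
  finally have "x - s *\<^sub>R y \<in> C" using e(2) by (auto simp: dist_norm)
  then have "cone_le C (s *\<^sub>R y) x" by (simp add: cone_le_def)
  from cone_le_scaleR[OF assms(1) this, of "1/s"] s have "cone_le C y ((1/s) *\<^sub>R x)" by simp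
  with s show thesis by (intro that[of "1/s"]) auto
qed

lemma interior_closed_cone_add:
  assumes "closed_cone C" "x \<in> interior C" "u \<in> C"
  shows "x + u \<in> interior C"
proof -
  obtain e where e: "e > 0" "ball x e \<subseteq> C" using assms(2) by (meson mem_interior)
  have "ball (x + u) e \<subseteq> C"
  proof
    fix z assume "z \<in> ball (x + u) e"
    then have "z - u \<in> C" using e(2) by (auto simp: dist_norm algebra_simps)
    from closed_cone_add[OF assms(1) this assms(3)] show "z \<in> C" by simp
  qed
  with e(1) show ?thesis by (meson mem_interior)
qed

definition thompson_ratios :: "'a::real_normed_vector set \<Rightarrow> 'a \<Rightarrow> 'a \<Rightarrow> real set" where
  "thompson_ratios C x y =
     {\<beta>. \<beta> \<ge> 1 \<and> cone_le C ((1/\<beta>) *\<^sub>R x) y \<and> cone_le C y (\<beta> *\<^sub>R x)}"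

lemma thompson_eq_ln_Inf: "thompson C x y = ln (Inf (thompson_ratios C x y))"
  by (simp add: thompson_def thompson_ratios_def)

lemma thompson_ratios_ge_1: "\<beta> \<in> thompson_ratios C x y \<Longrightarrow> \<beta> \<ge> 1"
  by (simp add: thompson_ratios_def)

lemma bdd_below_thompson_ratios: "bdd_below (thompson_ratios C x y)"
  by (rule bdd_belowI[of _ 1]) (simp add: thompson_ratios_def)

lemma thompson_ratios_nonempty:
  assumes "closed_cone C" "x \<in> interior C" "y \<in> interior C"
  shows "thompson_ratios C x y \<noteq> {}"
proof -
  obtain r1 where r1: "r1 > 0" "cone_le C y (r1 *\<^sub>R x)"
    using interior_closed_cone_absorbing[OF assms(1,2)] by blast
  obtain r2 where r2: "r2 > 0" "cone_le C x (r2 *\<^sub>R y)"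
    using interior_closed_cone_absorbing[OF assms(1,3)] by blast
  define b where "b = max (max r1 r2) 1"
  have b: "b \<ge> 1" "r1 \<le> b" "r2 \<le> b" by (auto simp: b_def)
  have xy: "x \<in> C" "y \<in> C" using assms(2,3) interior_subset by auto
  have "cone_le C y (b *\<^sub>R x)"
    using cone_le_trans[OF assms(1) r1(2) cone_le_scaleR_left[OF assms(1) xy(1) b(2)]] .
  moreover have "cone_le C x (b *\<^sub>R y)"
    using cone_le_trans[OF assms(1) r2(2) cone_le_scaleR_left[OF assms(1) xy(2) b(3)]] .
  then have "cone_le C ((1/b) *\<^sub>R x) y"
    using cone_le_scaleR[OF assms(1), of x "b *\<^sub>R y" "1/b"] b(1) by simp
  ultimately have "b \<in> thompson_ratios C x y" using b(1) by (simp add: thompson_ratios_def)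
  then show ?thesis by blast
qed

lemma exp_thompson:
  assumes "thompson_ratios C x y \<noteq> {}"
  shows "exp (thompson C x y) = Inf (thompson_ratios C x y)"
proof -
  have "Inf (thompson_ratios C x y) \<ge> 1"
    using assms by (rule cInf_greatest) (rule thompson_ratios_ge_1)
  then show ?thesis by (simp add: thompson_eq_ln_Inf)
qed

lemma thompson_ratio_lt:
  assumes "thompson_ratios C x y \<noteq> {}" "thompson C x y < s"
  obtains \<beta> where "\<beta> \<in> thompson_ratios C x y" "\<beta> < exp s"
proof -
  have "Inf (thompson_ratios C x y) < exp s"
    using assms by (metis exp_less_cancel_iff exp_thompson)
  with cInf_lessD[OF assms(1)] that show thesis by blast
qed

lemma cone_le_translate_ratio:
  assumes "closed_cone C" "1 \<le> \<beta>" "cone_le C y (\<beta> *\<^sub>R x)" "cone_le C (c *\<^sub>R (x + u)) u"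
  shows "cone_le C (y + u) (((1 - c) * \<beta> + c) *\<^sub>R (x + u))"
proof -
  have "(\<beta> - 1) *\<^sub>R (u - c *\<^sub>R (x + u)) \<in> C"
    using closed_cone_scaleR[OF assms(1)] assms(2,4) by (simp add: cone_le_def)
  then have "cone_le C (\<beta> *\<^sub>R x + u) (((1 - c) * \<beta> + c) *\<^sub>R (x + u))"
    by (simp add: cone_le_def algebra_simps)
  with cone_le_add_right[OF assms(3)] show ?thesis by (rule cone_le_trans[OF assms(1)])
qed

lemma translate_thompson_ratio:
  assumes "closed_cone C" "c \<le> 1" "\<beta> \<in> thompson_ratios C x y"
    and "cone_le C (c *\<^sub>R (x + u)) u" "cone_le C (c *\<^sub>R (y + u)) u"
  shows "(1 - c) * \<beta> + c \<in> thompson_ratios C (x + u) (y + u)"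
proof -
  define g where "g = (1 - c) * \<beta> + c"
  have \<beta>: "1 \<le> \<beta>" "cone_le C ((1/\<beta>) *\<^sub>R x) y" "cone_le C y (\<beta> *\<^sub>R x)"
    using assms(3) by (auto simp: thompson_ratios_def)
  have "(1 - c) * 1 \<le> (1 - c) * \<beta>" using \<beta>(1) assms(2) by (intro mult_left_mono) auto
  then have g: "g \<ge> 1" by (simp add: g_def)
  have "cone_le C x (\<beta> *\<^sub>R y)"
    using cone_le_scaleR[OF assms(1) \<beta>(2), of \<beta>] \<beta>(1) by simp
  from cone_le_translate_ratio[OF assms(1) \<beta>(1) this assms(5)]
  have "cone_le C ((1/g) *\<^sub>R (x + u)) (y + u)"
    using cone_le_scaleR[OF assms(1), of "x + u" "g *\<^sub>R (y + u)" "1/g"] g by (simp add: g_def)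
  moreover have "cone_le C (y + u) (g *\<^sub>R (x + u))"
    unfolding g_def by (rule cone_le_translate_ratio[OF assms(1) \<beta>(1,3) assms(4)])
  ultimately show ?thesis using g by (simp add: thompson_ratios_def g_def)
qed

lemma exp_thompson_translate_le:
  assumes "closed_cone C" "x \<in> interior C" "y \<in> interior C" "0 < c" "c < 1"
    and "cone_le C (c *\<^sub>R (x + u)) u" "cone_le C (c *\<^sub>R (y + u)) u"
  shows "exp (thompson C (x + u) (y + u)) \<le> (1 - c) * exp (thompson C x y) + c"
proof -
  let ?R = "thompson_ratios C x y" and ?R' = "thompson_ratios C (x + u) (y + u)"
  have R: "?R \<noteq> {}" by (rule thompson_ratios_nonempty[OF assms(1-3)])
  have translate: "(1 - c) * \<beta> + c \<in> ?R'" if "\<beta> \<in> ?R" for \<beta>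
    using translate_thompson_ratio[OF assms(1) _ that assms(6,7)] assms(5) by simp
  then have R': "?R' \<noteq> {}" using R by blast
  have "(Inf ?R' - c) / (1 - c) \<le> Inf ?R"
  proof (rule cInf_greatest[OF R])
    fix \<beta> assume "\<beta> \<in> ?R"
    then have "Inf ?R' \<le> (1 - c) * \<beta> + c"
      by (rule cInf_lower[OF translate bdd_below_thompson_ratios])
    with assms(5) show "(Inf ?R' - c) / (1 - c) \<le> \<beta>" by (simp add: divide_le_eq mult.commute)
  qed
  with assms(5) have "Inf ?R' \<le> (1 - c) * Inf ?R + c" by (simp add: divide_le_eq algebra_simps)
  then show ?thesis by (simp only: exp_thompson[OF R] exp_thompson[OF R'])
qed

lemma thompson_bounded_dominated:
  assumes "closed_cone C" "thompson_bounded C A" "u \<in> interior C"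
  obtains K where "K > 0" "\<And>x. x \<in> A \<Longrightarrow> cone_le C x (K *\<^sub>R u)"
proof (cases "A = {}")
  case False
  then obtain a where a: "a \<in> A" by blast
  obtain M where M: "\<And>x y. x \<in> A \<Longrightarrow> y \<in> A \<Longrightarrow> thompson C x y \<le> M" and A: "A \<subseteq> interior C"
    using assms(2) unfolding thompson_bounded_def by blast
  obtain r where r: "r > 0" "cone_le C a (r *\<^sub>R u)"
    using interior_closed_cone_absorbing[OF assms(1,3)] by blast
  have aC: "a \<in> C" using a A interior_subset by blast
  note cone_le_trans[OF assms(1), trans]
  have "cone_le C x ((exp (M + 1) * r) *\<^sub>R u)" if x: "x \<in> A" for x
  proof -
    have "thompson C a x < M + 1" using M[OF a x] by simp
    then obtain \<beta> where \<beta>: "\<beta> \<in> thompson_ratios C a x" "\<beta> < exp (M + 1)"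
      using thompson_ratio_lt thompson_ratios_nonempty[OF assms(1)] a x A by (metis subsetD)
    then have "cone_le C x (\<beta> *\<^sub>R a)" by (simp add: thompson_ratios_def)
    also have "cone_le C \<dots> (exp (M + 1) *\<^sub>R a)"
      using cone_le_scaleR_left[OF assms(1) aC] \<beta>(2) by simp
    also have "cone_le C \<dots> (exp (M + 1) *\<^sub>R (r *\<^sub>R u))"
      using cone_le_scaleR[OF assms(1) r(2)] by simp
    finally show ?thesis by simp
  qed
  with r(1) show thesis by (intro that[of "exp (M + 1) * r"]) auto
qed (use that[of 1] in simp)

definition tau_covers :: "'a::real_normed_vector set \<Rightarrow> 'a set \<Rightarrow> real set" where
  "tau_covers C A = {d. d > 0 \<and> (\<exists>F. finite F \<and> A \<subseteq> \<Union>F \<and>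
       (\<forall>S\<in>F. S \<subseteq> interior C \<and> (\<forall>x\<in>S. \<forall>y\<in>S. thompson C x y \<le> d)))}"

lemma tau_eq_Inf_tau_covers: "tau C A = Inf (tau_covers C A)"
  by (simp add: tau_def tau_covers_def)

lemma tau_le: "d \<in> tau_covers C A \<Longrightarrow> tau C A \<le> d"
  unfolding tau_eq_Inf_tau_covers
  by (rule cInf_lower) (auto intro!: bdd_belowI[of _ 0] simp: tau_covers_def)

lemma tau_covers_nonempty:
  assumes "thompson_bounded C A"
  shows "tau_covers C A \<noteq> {}"
proof -
  obtain M where "A \<subseteq> interior C" "\<forall>x\<in>A. \<forall>y\<in>A. thompson C x y \<le> M"
    using assms unfolding thompson_bounded_def by blast
  then have "max M 1 \<in> tau_covers C A"
    unfolding tau_covers_def by (auto intro!: exI[of _ "{A}"] simp: le_max_iff_disj)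
  then show ?thesis by blast
qed

lemma tau_image_le:
  assumes "d \<in> tau_covers C A" "p > 0" "f ` A \<subseteq> interior C"
    and "\<And>x y. x \<in> A \<Longrightarrow> y \<in> A \<Longrightarrow> thompson C x y \<le> d \<Longrightarrow> thompson C (f x) (f y) \<le> p"
  shows "tau C (f ` A) \<le> p"
proof -
  from assms(1) obtain F where F: "finite F" "A \<subseteq> \<Union>F"
    "\<forall>S\<in>F. S \<subseteq> interior C \<and> (\<forall>x\<in>S. \<forall>y\<in>S. thompson C x y \<le> d)"
    unfolding tau_covers_def by blast
  let ?F = "(\<lambda>S. f ` (S \<inter> A)) ` F"
  have "finite ?F" using F(1) by simp
  moreover have "f ` A \<subseteq> \<Union>?F"
  proof (rule image_subsetI)
    fix x assume "x \<in> A"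
    with F(2) obtain S where "S \<in> F" "x \<in> S" by blast
    with \<open>x \<in> A\<close> show "f x \<in> \<Union>?F" by blast
  qed
  moreover have "\<forall>S'\<in>?F. S' \<subseteq> interior C \<and> (\<forall>x\<in>S'. \<forall>y\<in>S'. thompson C x y \<le> p)"
    using assms(3,4) F(3) by fast
  ultimately have "p \<in> tau_covers C (f ` A)"
    using assms(2) unfolding tau_covers_def by blast
  then show ?thesis by (rule tau_le)
qed

lemma ln_affine_exp_inverse:
  fixes c t :: real
  assumes "0 < c" "c < 1" "0 < t"
  obtains L where "t < L" "\<And>d. d < L \<Longrightarrow> ln ((1 - c) * exp d + c) < t"
proof
  define L where "L = ln ((exp t - c) / (1 - c))"
  have "exp t * (1 - c) < exp t - c" using assms by (simp add: algebra_simps)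
  then have q: "exp t < (exp t - c) / (1 - c)" using assms(2) by (simp add: less_divide_eq)
  then show "t < L" unfolding L_def by (metis exp_gt_zero exp_less_cancel_iff exp_ln less_trans)
  fix d assume "d < L"
  then have "exp d < (exp t - c) / (1 - c)"
    unfolding L_def using q by (metis exp_gt_zero exp_less_cancel_iff exp_ln less_trans)
  then have "(1 - c) * exp d + c < exp t" using assms(2) by (simp add: less_divide_eq mult.commute)
  then show "ln ((1 - c) * exp d + c) < t"
    using assms by (metis add_pos_pos exp_gt_zero ln_less_cancel_iff ln_exp mult_pos_pos diff_gt_0_iff_gt)
qed

lemma tau_translate_lt:
  assumes "closed_cone C" "u \<in> interior C" "thompson_bounded C A" "tau C A > 0"
  shows "tau C ((\<lambda>x. x + u) ` A) < tau C A"
proof -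
  have A: "A \<subseteq> interior C" and uC: "u \<in> C"
    using assms(2,3) interior_subset unfolding thompson_bounded_def by auto
  obtain K where K: "K > 0" "\<And>x. x \<in> A \<Longrightarrow> cone_le C x (K *\<^sub>R u)"
    using thompson_bounded_dominated[OF assms(1,3,2)] by blast
  define c where "c = 1 / (K + 1)"
  have c: "0 < c" "c < 1" using K(1) by (auto simp: c_def)
  have below_u: "cone_le C (c *\<^sub>R (x + u)) u" if "x \<in> A" for x
  proof -
    have "cone_le C (c *\<^sub>R (x + u)) (c *\<^sub>R (K *\<^sub>R u + u))"
      using cone_le_scaleR[OF assms(1) cone_le_add_right[OF K(2)[OF that]]] c(1) by simp
    also have "c *\<^sub>R (K *\<^sub>R u + u) = (c * (K + 1)) *\<^sub>R u" by (simp add: algebra_simps)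
    also have "c * (K + 1) = 1" using K(1) by (simp add: c_def)
    finally show ?thesis by simp
  qed
  obtain L where L: "tau C A < L" "\<And>d. d < L \<Longrightarrow> ln ((1 - c) * exp d + c) < tau C A"
    using ln_affine_exp_inverse[OF c assms(4)] by blast
  then obtain d where d: "d \<in> tau_covers C A" "d < L"
    using cInf_lessD[OF tau_covers_nonempty[OF assms(3)]] by (metis tau_eq_Inf_tau_covers)
  have "d > 0" using d(1) by (simp add: tau_covers_def)
  then have "(1 - c) * 1 < (1 - c) * exp d" using c by (intro mult_strict_left_mono) auto
  then have gt_1: "1 < (1 - c) * exp d + c" by simp
  have "tau C ((\<lambda>x. x + u) ` A) \<le> ln ((1 - c) * exp d + c)"
  proof (rule tau_image_le[OF d(1)])
    show "0 < ln ((1 - c) * exp d + c)" using gt_1 by simp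
    show "(\<lambda>x. x + u) ` A \<subseteq> interior C" using A interior_closed_cone_add[OF assms(1) _ uC] by blast
  next
    fix x y assume xy: "x \<in> A" "y \<in> A" "thompson C x y \<le> d"
    have "exp (thompson C (x + u) (y + u)) \<le> (1 - c) * exp (thompson C x y) + c"
      using exp_thompson_translate_le[OF assms(1) _ _ c below_u below_u] xy A by blast
    also have "\<dots> \<le> (1 - c) * exp d + c" using xy(3) c(2) by simp
    finally show "thompson C (x + u) (y + u) \<le> ln ((1 - c) * exp d + c)"
      using gt_1 by (simp add: ln_ge_iff)
  qed
  with L(2)[OF d(2)] show ?thesis by linarith
qed

theorem lemma2p4:
  fixes C :: "'a::banach set" and u :: 'a
  assumes "closed_cone C" and "normal_cone C" and "interior C \<noteq> {}"
    and "u \<in> interior C"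
  shows "tau_condensing C (interior C) (\<lambda>x. x + u)"
proof -
  have "x + u \<in> interior C" if "x \<in> interior C" for x
    using interior_closed_cone_add[OF assms(1) that] assms(4) interior_subset by blast
  then show ?thesis
    unfolding tau_condensing_def
    using tau_translate_lt[OF assms(1,4)] continuous_on_add[OF continuous_on_id continuous_on_const]
    by blast
qed

end
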